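(* Let $(L,M,N,P)$ be a crossed square with maps $\lambda,\lambda',\mu,\nu$ and function $h$. Let $L\rtimes N$ and $M\rtimes P$ be the semidirect products (with $N$ acting on $L$ via $\nu$), i.e. $(l,n)+(l',n')=(l+n\cdot l',n+n')$ and $(m,p)+(m',p')=(m+p\cdot m',p+p')$. Let $M\rtimes P$ act on $L\rtimes N$ by $(m,p)\cdot(l,n)=(m\cdot(p\cdot l)+h(m,p\cdot n),\ p\cdot n)$. Then $C_1=(L\rtimes N,M\rtimes P,\lambda\times\nu)$ and $C_0=(N,P,\nu)$ are crossed modules, and together with $s_A(l,n)=n$, $s_B(m,p)=p$, $t_A(l,n)=\lambda'(l)+n$, $t_B(m,p)=\mu(m)+p$, $\varepsilon_A(n)=(0,n)$, $\varepsilon_B(p)=(0,p)$ and compositions $(l',\lambda'(l)+n)\circ(l,n)=(l'+l,n)$, $(m',\mu(m)+p)\circ(m,p)=(m'+m,p)$, they form an internal category in $\mathsf{XMod}$.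
   Context: Groups are written additively. A crossed module $(A,B,\alpha)$: groups $A,B$, a left action of $B$ on $A$ by automorphisms, a homomorphism $\alpha:A\to B$ with $\alpha(b\cdot a)=b+\alpha(a)-b$ and $\alpha(a)\cdot a'=a+a'-a$. Morphisms $\langle f_A,f_B\rangle$ are pairs of homomorphisms with $f_B\alpha=\alpha'f_A$, $f_A(b\cdot a)=f_B(b)\cdot f_A(a)$. An internal category in $\mathsf{XMod}$ consists of crossed modules $C_1=(A_1,B_1,\alpha_1)$, $C_0=(A_0,B_0,\alpha_0)$ and crossed module morphisms $s=\langle s_A,s_B\rangle, t=\langle t_A,t_B\rangle:C_1\to C_0$, $\varepsilon=\langle\varepsilon_A,\varepsilon_B\rangle:C_0\to C_1$, $m=\langle m_A,m_B\rangle:C_1\,{}_s\!\times_t C_1\to C_1$ (pullback computed componentwise, pairs $(x,y)$ with $s(x)=t(y)$, componentwise action; $m(x,y)$ written $x\circ y$) satisfying $s\varepsilon=t\varepsilon=1$, $sm=s\pi_2$, $tm=t\pi_1$, associativity and unit laws $m(\varepsilon s,1)=m(1,\varepsilon t)=1$. A crossed square: homomorphisms $\lambda:L\to M$, $\lambda':L\to N$, $\mu:M\to P$, $\nu:N\to P$ with $\nu\lambda'=\mu\lambda$, left actions of $P$ on $L,M,N$ (inducing actions of $M$ on $L,N$ via $\mu$ and of $N$ on $L,M$ via $\nu$, e.g. $m\cdot l=\mu(m)\cdot l$), and $h:M\times N\to L$, such that (i) $\lambda,\lambda'$ are $P$-equivariant and $\mu$, $\nu$, $\mu\lambda$ are crossed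 modules; (ii) $\lambda h(m,n)=m+n\cdot(-m)$, $\lambda'h(m,n)=m\cdot n-n$; (iii) $h(\lambda(l),n)=l+n\cdot(-l)$, $h(m,\lambda'(l))=m\cdot l-l$; (iv) $h(m+m',n)=m\cdot h(m',n)+h(m,n)$, $h(m,n+n')=h(m,n)+n\cdot h(m,n')$; (v) $h(p\cdot m,p\cdot n)=p\cdot h(m,n)$. *)

theory Defs
  imports "HOL-Algebra.Group"
begin

(* Groups are HOL-Algebra groups (the paper's additive notation x + y is written
  x <otimes> y, 0 is <one>, -x is inv x). *)

definition action_by_automorphisms ::
  "('a, 'c) monoid_scheme \<Rightarrow> ('b, 'd) monoid_scheme \<Rightarrow> ('b \<Rightarrow> 'a \<Rightarrow> 'a) \<Rightarrow> bool" where
  "action_by_automorphisms A B act \<longleftrightarrow>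
     (\<forall>b\<in>carrier B. act b \<in> hom A A \<and> bij_betw (act b) (carrier A) (carrier A)) \<and>
     (\<forall>a\<in>carrier A. act \<one>\<^bsub>B\<^esub> a = a) \<and>
     (\<forall>b\<in>carrier B. \<forall>b'\<in>carrier B. \<forall>a\<in>carrier A.
        act (b \<otimes>\<^bsub>B\<^esub> b') a = act b (act b' a))"

definition crossed_module ::
  "('a, 'c) monoid_scheme \<Rightarrow> ('b, 'd) monoid_scheme \<Rightarrow> ('b \<Rightarrow> 'a \<Rightarrow> 'a) \<Rightarrow> ('a \<Rightarrow> 'b) \<Rightarrow> bool" where
  "crossed_module A B act \<alpha> \<longleftrightarrow>
     group A \<and> group B \<and> action_by_automorphisms A B act \<and> \<alpha> \<in> hom A B \<and>
     (\<forall>b\<in>carrier B. \<forall>a\<in>carrier A.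
        \<alpha> (act b a) = b \<otimes>\<^bsub>B\<^esub> \<alpha> a \<otimes>\<^bsub>B\<^esub> inv\<^bsub>B\<^esub> b) \<and>
     (\<forall>a\<in>carrier A. \<forall>a'\<in>carrier A.
        act (\<alpha> a) a' = a \<otimes>\<^bsub>A\<^esub> a' \<otimes>\<^bsub>A\<^esub> inv\<^bsub>A\<^esub> a)"

definition xmod_hom ::
  "('a, 'c) monoid_scheme \<Rightarrow> ('b, 'd) monoid_scheme \<Rightarrow> ('b \<Rightarrow> 'a \<Rightarrow> 'a) \<Rightarrow> ('a \<Rightarrow> 'b) \<Rightarrow>
   ('e, 'g) monoid_scheme \<Rightarrow> ('f, 'h) monoid_scheme \<Rightarrow> ('f \<Rightarrow> 'e \<Rightarrow> 'e) \<Rightarrow> ('e \<Rightarrow> 'f) \<Rightarrow>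
   ('a \<Rightarrow> 'e) \<Rightarrow> ('b \<Rightarrow> 'f) \<Rightarrow> bool" where
  "xmod_hom A B act \<alpha> A' B' act' \<alpha>' fA fB \<longleftrightarrow>
     fA \<in> hom A A' \<and> fB \<in> hom B B' \<and>
     (\<forall>a\<in>carrier A. fB (\<alpha> a) = \<alpha>' (fA a)) \<and>
     (\<forall>b\<in>carrier B. \<forall>a\<in>carrier A. fA (act b a) = act' (fB b) (fA a))"

definition pullback_group ::
  "('a, 'c) monoid_scheme \<Rightarrow> ('a \<Rightarrow> 'e) \<Rightarrow> ('a \<Rightarrow> 'e) \<Rightarrow> ('a \<times> 'a) monoid" where
  "pullback_group G s t =
     \<lparr>carrier = {(x, y). x \<in> carrier G \<and> y \<in> carrier G \<and> s x = t y},
      mult = (\<lambda>(x, y) (x', y'). (x \<otimes>\<^bsub>G\<^esub> x', y \<otimes>\<^bsub>G\<^esub> y')),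
      one = (\<one>\<^bsub>G\<^esub>, \<one>\<^bsub>G\<^esub>)\<rparr>"

definition pair_act :: "('b \<Rightarrow> 'a \<Rightarrow> 'a) \<Rightarrow> ('b \<times> 'b) \<Rightarrow> ('a \<times> 'a) \<Rightarrow> ('a \<times> 'a)" where
  "pair_act act = (\<lambda>(b, b') (a, a'). (act b a, act b' a'))"

definition pair_map :: "('a \<Rightarrow> 'b) \<Rightarrow> ('a \<times> 'a) \<Rightarrow> ('b \<times> 'b)" where
  "pair_map f = (\<lambda>(a, a'). (f a, f a'))"

(* Internal category in XMod, with C1 = (A1,B1,act1,<alpha>1), C0 = (A0,B0,act0,<alpha>0),
  morphisms s = (sA,sB), t = (tA,tB), <epsilon> = (eA,eB), m = (mA,mB); m(x,y) = x <circ> y is defined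
  for s x = t y. *)
definition internal_cat_xmod ::
  "('a, 'c) monoid_scheme \<Rightarrow> ('b, 'd) monoid_scheme \<Rightarrow> ('b \<Rightarrow> 'a \<Rightarrow> 'a) \<Rightarrow> ('a \<Rightarrow> 'b) \<Rightarrow>
   ('e, 'g) monoid_scheme \<Rightarrow> ('f, 'h) monoid_scheme \<Rightarrow> ('f \<Rightarrow> 'e \<Rightarrow> 'e) \<Rightarrow> ('e \<Rightarrow> 'f) \<Rightarrow>
   ('a \<Rightarrow> 'e) \<Rightarrow> ('b \<Rightarrow> 'f) \<Rightarrow> ('a \<Rightarrow> 'e) \<Rightarrow> ('b \<Rightarrow> 'f) \<Rightarrow>
   ('e \<Rightarrow> 'a) \<Rightarrow> ('f \<Rightarrow> 'b) \<Rightarrow> ('a \<times> 'a \<Rightarrow> 'a) \<Rightarrow> ('b \<times> 'b \<Rightarrow> 'b) \<Rightarrow> bool" where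
  "internal_cat_xmod A1 B1 act1 \<alpha>1 A0 B0 act0 \<alpha>0 sA sB tA tB eA eB mA mB \<longleftrightarrow>
     crossed_module A1 B1 act1 \<alpha>1 \<and> crossed_module A0 B0 act0 \<alpha>0 \<and>
     xmod_hom A1 B1 act1 \<alpha>1 A0 B0 act0 \<alpha>0 sA sB \<and>
     xmod_hom A1 B1 act1 \<alpha>1 A0 B0 act0 \<alpha>0 tA tB \<and>
     xmod_hom A0 B0 act0 \<alpha>0 A1 B1 act1 \<alpha>1 eA eB \<and>
     xmod_hom (pullback_group A1 sA tA) (pullback_group B1 sB tB) (pair_act act1) (pair_map \<alpha>1)
              A1 B1 act1 \<alpha>1 mA mB \<and>
     \<comment> \<open>s \<epsilon> = 1, t \<epsilon> = 1\<close>
     (\<forall>x\<in>carrier A0. sA (eA x) = x \<and> tA (eA x) = x) \<and>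
     (\<forall>x\<in>carrier B0. sB (eB x) = x \<and> tB (eB x) = x) \<and>
     \<comment> \<open>s m = s \<pi>2, t m = t \<pi>1\<close>
     (\<forall>x\<in>carrier A1. \<forall>y\<in>carrier A1. sA x = tA y \<longrightarrow>
        sA (mA (x, y)) = sA y \<and> tA (mA (x, y)) = tA x) \<and>
     (\<forall>x\<in>carrier B1. \<forall>y\<in>carrier B1. sB x = tB y \<longrightarrow>
        sB (mB (x, y)) = sB y \<and> tB (mB (x, y)) = tB x) \<and>
     \<comment> \<open>associativity\<close>
     (\<forall>x\<in>carrier A1. \<forall>y\<in>carrier A1. \<forall>z\<in>carrier A1. sA x = tA y \<longrightarrow> sA y = tA z \<longrightarrow>
        mA (mA (x, y), z) = mA (x, mA (y, z))) \<and>
     (\<forall>x\<in>carrier B1. \<forall>y\<in>carrier B1. \<forall>z\<in>carrier B1. sB x = tB y \<longrightarrow> sB y = tB z \<longrightarrow>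
        mB (mB (x, y), z) = mB (x, mB (y, z))) \<and>
     \<comment> \<open>unit laws: x \<circ> \<epsilon>(s x) = x = \<epsilon>(t x) \<circ> x\<close>
     (\<forall>x\<in>carrier A1. mA (x, eA (sA x)) = x \<and> mA (eA (tA x), x) = x) \<and>
     (\<forall>x\<in>carrier B1. mB (x, eB (sB x)) = x \<and> mB (eB (tB x), x) = x)"

(* Crossed square. Actions of P on L, M, N are actL, actM, actN; the induced actions
  m<cdot>l = actL (<mu> m) l, n<cdot>l = actL (<nu> n) l, n<cdot>m = actM (<nu> n) m, m<cdot>n = actN (<mu> m) n. *)
definition crossed_square ::
  "('l, 'c1) monoid_scheme \<Rightarrow> ('m, 'c2) monoid_scheme \<Rightarrow> ('n, 'c3) monoid_scheme \<Rightarrow> ('p, 'c4) monoid_scheme \<Rightarrow>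
   ('l \<Rightarrow> 'm) \<Rightarrow> ('l \<Rightarrow> 'n) \<Rightarrow> ('m \<Rightarrow> 'p) \<Rightarrow> ('n \<Rightarrow> 'p) \<Rightarrow>
   ('p \<Rightarrow> 'l \<Rightarrow> 'l) \<Rightarrow> ('p \<Rightarrow> 'm \<Rightarrow> 'm) \<Rightarrow> ('p \<Rightarrow> 'n \<Rightarrow> 'n) \<Rightarrow> ('m \<Rightarrow> 'n \<Rightarrow> 'l) \<Rightarrow> bool" where
  "crossed_square L M N P lam lam' mu nu actL actM actN h \<longleftrightarrow>
     group L \<and> group M \<and> group N \<and> group P \<and>
     lam \<in> hom L M \<and> lam' \<in> hom L N \<and> mu \<in> hom M P \<and> nu \<in> hom N P \<and>
     (\<forall>l\<in>carrier L. nu (lam' l) = mu (lam l)) \<and>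
     action_by_automorphisms L P actL \<and> action_by_automorphisms M P actM \<and>
     action_by_automorphisms N P actN \<and>
     (\<forall>m\<in>carrier M. \<forall>n\<in>carrier N. h m n \<in> carrier L) \<and>
     \<comment> \<open>(i)\<close>
     (\<forall>p\<in>carrier P. \<forall>l\<in>carrier L. lam (actL p l) = actM p (lam l) \<and> lam' (actL p l) = actN p (lam' l)) \<and>
     crossed_module M P actM mu \<and> crossed_module N P actN nu \<and>
     crossed_module L P actL (mu \<circ> lam) \<and>
     \<comment> \<open>(ii)\<close>
     (\<forall>m\<in>carrier M. \<forall>n\<in>carrier N.
        lam (h m n) = m \<otimes>\<^bsub>M\<^esub> actM (nu n) (inv\<^bsub>M\<^esub> m) \<and>
        lam' (h m n) = actN (mu m) n \<otimes>\<^bsub>N\<^esub> inv\<^bsub>N\<^esub> n) \<and>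
     \<comment> \<open>(iii)\<close>
     (\<forall>l\<in>carrier L. \<forall>n\<in>carrier N.
        h (lam l) n = l \<otimes>\<^bsub>L\<^esub> actL (nu n) (inv\<^bsub>L\<^esub> l)) \<and>
     (\<forall>m\<in>carrier M. \<forall>l\<in>carrier L.
        h m (lam' l) = actL (mu m) l \<otimes>\<^bsub>L\<^esub> inv\<^bsub>L\<^esub> l) \<and>
     \<comment> \<open>(iv)\<close>
     (\<forall>m\<in>carrier M. \<forall>m'\<in>carrier M. \<forall>n\<in>carrier N.
        h (m \<otimes>\<^bsub>M\<^esub> m') n = actL (mu m) (h m' n) \<otimes>\<^bsub>L\<^esub> h m n) \<and>
     (\<forall>m\<in>carrier M. \<forall>n\<in>carrier N. \<forall>n'\<in>carrier N.
        h m (n \<otimes>\<^bsub>N\<^esub> n') = h m n \<otimes>\<^bsub>L\<^esub> actL (nu n) (h m n')) \<and>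
     \<comment> \<open>(v)\<close>
     (\<forall>p\<in>carrier P. \<forall>m\<in>carrier M. \<forall>n\<in>carrier N.
        h (actM p m) (actN p n) = actL p (h m n))"

definition semidirect ::
  "('a, 'c) monoid_scheme \<Rightarrow> ('b, 'd) monoid_scheme \<Rightarrow> ('b \<Rightarrow> 'a \<Rightarrow> 'a) \<Rightarrow> ('a \<times> 'b) monoid" where
  "semidirect G H act =
     \<lparr>carrier = carrier G \<times> carrier H,
      mult = (\<lambda>(g, h) (g', h'). (g \<otimes>\<^bsub>G\<^esub> act h g', h \<otimes>\<^bsub>H\<^esub> h')),
      one = (\<one>\<^bsub>G\<^esub>, \<one>\<^bsub>H\<^esub>)\<rparr>"

end

theory Submission
  imports Defs
begin

text \<open>
  Everything reduces to identities in \<open>L\<close>. Conjugation by \<open>h(m, n)\<close> in \<open>L\<close> is the action of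
  \<open>\<mu>\<lambda>h(m, n)\<close>, the commutator of \<open>\<mu> m\<close> and \<open>\<nu> n\<close> (Peiffer identity for \<open>\<mu>\<lambda>\<close> and axiom (ii)),
  so \<open>h(m, n)\<close> intertwines acting by \<open>m\<close> then \<open>n\<close> with acting by \<open>n\<close> then \<open>m\<close>; this is exactly what
  makes the action of \<open>(m, p)\<close> on \<open>L \<rtimes> N\<close> multiplicative, while (iv) and (v) make it an action.
  Composition respects the actions because moving the \<open>N\<close>-component by \<open>\<lambda>'(z)\<close> changes
  \<open>h(m', -)\<close> by conjugation with \<open>z\<close>, by (iii) and (iv).
\<close>

lemma (in group) mult_inv_cancel_left [simp]: "x \<in> carrier G \<Longrightarrow> y \<in> carrier G \<Longrightarrow> x \<otimes> (inv x \<otimes> y) = y"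
  by (simp flip: m_assoc)

lemma (in group) inv_mult_cancel_left [simp]: "x \<in> carrier G \<Longrightarrow> y \<in> carrier G \<Longrightarrow> inv x \<otimes> (x \<otimes> y) = y"
  by (simp flip: m_assoc)

locale aut_action = A: group A + B: group B
  for A :: "('a, 'c) monoid_scheme" and B :: "('b, 'd) monoid_scheme" and act :: "'b \<Rightarrow> 'a \<Rightarrow> 'a" +
  assumes action_by_automorphisms: "action_by_automorphisms A B act"
begin

lemma group_hom_act: "b \<in> carrier B \<Longrightarrow> group_hom A A (act b)"
  using action_by_automorphisms
  by (simp add: action_by_automorphisms_def group_hom_def group_hom_axioms_def A.group_axioms)

lemma act_closed [simp]: "b \<in> carrier B \<Longrightarrow> a \<in> carrier A \<Longrightarrow> act b a \<in> carrier A"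
  by (rule group_hom.hom_closed[OF group_hom_act])

lemma act_mult [simp]:
  "b \<in> carrier B \<Longrightarrow> x \<in> carrier A \<Longrightarrow> y \<in> carrier A \<Longrightarrow> act b (x \<otimes>\<^bsub>A\<^esub> y) = act b x \<otimes>\<^bsub>A\<^esub> act b y"
  by (rule group_hom.hom_mult[OF group_hom_act])

lemma act_one [simp]: "b \<in> carrier B \<Longrightarrow> act b \<one>\<^bsub>A\<^esub> = \<one>\<^bsub>A\<^esub>"
  by (rule group_hom.hom_one[OF group_hom_act])

lemma one_act [simp]: "x \<in> carrier A \<Longrightarrow> act \<one>\<^bsub>B\<^esub> x = x"
  using action_by_automorphisms by (simp add: action_by_automorphisms_def)

lemma mult_act:
  "b \<in> carrier B \<Longrightarrow> b' \<in> carrier B \<Longrightarrow> x \<in> carrier A \<Longrightarrow> act (b \<otimes>\<^bsub>B\<^esub> b') x = act b (act b' x)"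
  using action_by_automorphisms by (simp add: action_by_automorphisms_def)

lemma act_inv_act [simp]:
  "b \<in> carrier B \<Longrightarrow> x \<in> carrier A \<Longrightarrow> act b (act (inv\<^bsub>B\<^esub> b) x) = x"
  "b \<in> carrier B \<Longrightarrow> x \<in> carrier A \<Longrightarrow> act (inv\<^bsub>B\<^esub> b) (act b x) = x"
  by (simp_all flip: mult_act)

end

lemma action_by_automorphismsI:
  assumes "group A" and "group B"
    and closed: "\<And>b a. b \<in> carrier B \<Longrightarrow> a \<in> carrier A \<Longrightarrow> act b a \<in> carrier A"
    and mult: "\<And>b x y. b \<in> carrier B \<Longrightarrow> x \<in> carrier A \<Longrightarrow> y \<in> carrier A \<Longrightarrow>
                 act b (x \<otimes>\<^bsub>A\<^esub> y) = act b x \<otimes>\<^bsub>A\<^esub> act b y"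
    and one: "\<And>a. a \<in> carrier A \<Longrightarrow> act \<one>\<^bsub>B\<^esub> a = a"
    and compose: "\<And>b b' a. b \<in> carrier B \<Longrightarrow> b' \<in> carrier B \<Longrightarrow> a \<in> carrier A \<Longrightarrow>
                 act (b \<otimes>\<^bsub>B\<^esub> b') a = act b (act b' a)"
  shows "action_by_automorphisms A B act"
  unfolding action_by_automorphisms_def
proof (intro conjI ballI)
  interpret B: group B by fact
  fix b assume b: "b \<in> carrier B"
  show "act b \<in> hom A A" using closed mult b by (auto simp: hom_def)
  show "bij_betw (act b) (carrier A) (carrier A)"
  proof (rule bij_betwI[where g = "act (inv\<^bsub>B\<^esub> b)"])
    fix x assume x: "x \<in> carrier A"
    show "act (inv\<^bsub>B\<^esub> b) (act b x) = x" "act b (act (inv\<^bsub>B\<^esub> b) x) = x"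
      using x b by (simp_all flip: compose add: one)
  qed (use closed b in auto)
qed (use one compose in auto)

lemma action_by_automorphisms_via_hom:
  assumes "aut_action A B act" and "group C" and "f \<in> hom C B"
  shows "action_by_automorphisms A C (\<lambda>c. act (f c))"
proof -
  interpret aut_action A B act by fact
  interpret f: group_hom C B f by (simp add: group_hom_def group_hom_axioms_def assms)
  show ?thesis
    by (rule action_by_automorphismsI) (simp_all add: A.group_axioms \<open>group C\<close> mult_act)
qed

lemma semidirect_carrier [simp]: "carrier (semidirect G H act) = carrier G \<times> carrier H"
  and semidirect_mult [simp]: "(g, h) \<otimes>\<^bsub>semidirect G H act\<^esub> (g', h') = (g \<otimes>\<^bsub>G\<^esub> act h g', h \<otimes>\<^bsub>H\<^esub> h')"
  and semidirect_one [simp]: "\<one>\<^bsub>semidirect G H act\<^esub> = (\<one>\<^bsub>G\<^esub>, \<one>\<^bsub>H\<^esub>)"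
  by (simp_all add: semidirect_def)

context aut_action
begin

lemma semidirect_l_inv:
  "a \<in> carrier A \<Longrightarrow> b \<in> carrier B \<Longrightarrow>
   (act (inv\<^bsub>B\<^esub> b) (inv\<^bsub>A\<^esub> a), inv\<^bsub>B\<^esub> b) \<otimes>\<^bsub>semidirect A B act\<^esub> (a, b) = \<one>\<^bsub>semidirect A B act\<^esub>"
  by (simp flip: act_mult)

lemma semidirect_group: "group (semidirect A B act)"
proof (rule groupI)
  fix x assume "x \<in> carrier (semidirect A B act)"
  then show "\<exists>y\<in>carrier (semidirect A B act). y \<otimes>\<^bsub>semidirect A B act\<^esub> x = \<one>\<^bsub>semidirect A B act\<^esub>"
  proof (cases x)
    case (Pair a b)
    with \<open>x \<in> carrier (semidirect A B act)\<close> show ?thesis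
      using semidirect_l_inv[of a b] by (intro bexI[of _ "(act (inv\<^bsub>B\<^esub> b) (inv\<^bsub>A\<^esub> a), inv\<^bsub>B\<^esub> b)"]) auto
  qed
qed (auto simp: mult_act A.m_assoc B.m_assoc)

lemma semidirect_inv [simp]:
  "a \<in> carrier A \<Longrightarrow> b \<in> carrier B \<Longrightarrow>
   inv\<^bsub>semidirect A B act\<^esub> (a, b) = (act (inv\<^bsub>B\<^esub> b) (inv\<^bsub>A\<^esub> a), inv\<^bsub>B\<^esub> b)"
  by (intro group.inv_equality[OF semidirect_group] semidirect_l_inv) auto

end

lemma pullback_group_carrier [simp]:
    "carrier (pullback_group G s t) = {(x, y). x \<in> carrier G \<and> y \<in> carrier G \<and> s x = t y}"
  and pullback_group_mult [simp]:
    "(x, y) \<otimes>\<^bsub>pullback_group G s t\<^esub> (x', y') = (x \<otimes>\<^bsub>G\<^esub> x', y \<otimes>\<^bsub>G\<^esub> y')"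
  by (simp_all add: pullback_group_def)

locale crossed_sq =
  fixes L :: "('l, 'c1) monoid_scheme" and M :: "('m, 'c2) monoid_scheme"
    and N :: "('n, 'c3) monoid_scheme" and P :: "('p, 'c4) monoid_scheme"
    and lam :: "'l \<Rightarrow> 'm" and lam' :: "'l \<Rightarrow> 'n" and mu :: "'m \<Rightarrow> 'p" and nu :: "'n \<Rightarrow> 'p"
    and actL :: "'p \<Rightarrow> 'l \<Rightarrow> 'l" and actM :: "'p \<Rightarrow> 'm \<Rightarrow> 'm" and actN :: "'p \<Rightarrow> 'n \<Rightarrow> 'n"
    and h :: "'m \<Rightarrow> 'n \<Rightarrow> 'l"
  assumes crossed_square: "crossed_square L M N P lam lam' mu nu actL actM actN h"
begin

sublocale L: group L using crossed_square by (simp add: crossed_square_def)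
sublocale M: group M using crossed_square by (simp add: crossed_square_def)
sublocale N: group N using crossed_square by (simp add: crossed_square_def)
sublocale P: group P using crossed_square by (simp add: crossed_square_def)

sublocale lam: group_hom L M lam
  using crossed_square by (simp add: crossed_square_def group_hom_def group_hom_axioms_def)
sublocale lam': group_hom L N lam'
  using crossed_square by (simp add: crossed_square_def group_hom_def group_hom_axioms_def)
sublocale mu: group_hom M P mu
  using crossed_square by (simp add: crossed_square_def group_hom_def group_hom_axioms_def)
sublocale nu: group_hom N P nu
  using crossed_square by (simp add: crossed_square_def group_hom_def group_hom_axioms_def)

sublocale LP: aut_action L P actL
  using crossed_square by (simp add: crossed_square_def aut_action_def aut_action_axioms_def)
sublocale MP: aut_action M P actM
  using crossed_square by (simp add: crossed_square_def aut_action_def aut_action_axioms_def)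
sublocale NP: aut_action N P actN
  using crossed_square by (simp add: crossed_square_def aut_action_def aut_action_axioms_def)

lemma crossed_module_NP: "crossed_module N P actN nu"
  using crossed_square by (simp add: crossed_square_def)

lemma mu_act: "p \<in> carrier P \<Longrightarrow> m \<in> carrier M \<Longrightarrow> mu (actM p m) = p \<otimes>\<^bsub>P\<^esub> mu m \<otimes>\<^bsub>P\<^esub> inv\<^bsub>P\<^esub> p"
  and peiffer_M: "m \<in> carrier M \<Longrightarrow> m' \<in> carrier M \<Longrightarrow> actM (mu m) m' = m \<otimes>\<^bsub>M\<^esub> m' \<otimes>\<^bsub>M\<^esub> inv\<^bsub>M\<^esub> m"
  and nu_act: "p \<in> carrier P \<Longrightarrow> n \<in> carrier N \<Longrightarrow> nu (actN p n) = p \<otimes>\<^bsub>P\<^esub> nu n \<otimes>\<^bsub>P\<^esub> inv\<^bsub>P\<^esub> p"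
  and peiffer_N: "n \<in> carrier N \<Longrightarrow> n' \<in> carrier N \<Longrightarrow> actN (nu n) n' = n \<otimes>\<^bsub>N\<^esub> n' \<otimes>\<^bsub>N\<^esub> inv\<^bsub>N\<^esub> n"
  and peiffer_L: "l \<in> carrier L \<Longrightarrow> l' \<in> carrier L \<Longrightarrow> actL (mu (lam l)) l' = l \<otimes>\<^bsub>L\<^esub> l' \<otimes>\<^bsub>L\<^esub> inv\<^bsub>L\<^esub> l"
  using crossed_square by (simp_all add: crossed_square_def crossed_module_def)

lemma nu_lam': "l \<in> carrier L \<Longrightarrow> nu (lam' l) = mu (lam l)"
  and lam_act: "p \<in> carrier P \<Longrightarrow> l \<in> carrier L \<Longrightarrow> lam (actL p l) = actM p (lam l)"
  and lam'_act: "p \<in> carrier P \<Longrightarrow> l \<in> carrier L \<Longrightarrow> lam' (actL p l) = actN p (lam' l)"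
  and h_closed [simp]: "m \<in> carrier M \<Longrightarrow> n \<in> carrier N \<Longrightarrow> h m n \<in> carrier L"
  and lam_h: "m \<in> carrier M \<Longrightarrow> n \<in> carrier N \<Longrightarrow> lam (h m n) = m \<otimes>\<^bsub>M\<^esub> actM (nu n) (inv\<^bsub>M\<^esub> m)"
  and lam'_h: "m \<in> carrier M \<Longrightarrow> n \<in> carrier N \<Longrightarrow> lam' (h m n) = actN (mu m) n \<otimes>\<^bsub>N\<^esub> inv\<^bsub>N\<^esub> n"
  and h_lam_left: "l \<in> carrier L \<Longrightarrow> n \<in> carrier N \<Longrightarrow> h (lam l) n = l \<otimes>\<^bsub>L\<^esub> actL (nu n) (inv\<^bsub>L\<^esub> l)"
  and h_lam'_right: "m \<in> carrier M \<Longrightarrow> l \<in> carrier L \<Longrightarrow> h m (lam' l) = actL (mu m) l \<otimes>\<^bsub>L\<^esub> inv\<^bsub>L\<^esub> l"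
  and h_mult_left: "m \<in> carrier M \<Longrightarrow> m' \<in> carrier M \<Longrightarrow> n \<in> carrier N \<Longrightarrow>
    h (m \<otimes>\<^bsub>M\<^esub> m') n = actL (mu m) (h m' n) \<otimes>\<^bsub>L\<^esub> h m n"
  and h_mult_right: "m \<in> carrier M \<Longrightarrow> n \<in> carrier N \<Longrightarrow> n' \<in> carrier N \<Longrightarrow>
    h m (n \<otimes>\<^bsub>N\<^esub> n') = h m n \<otimes>\<^bsub>L\<^esub> actL (nu n) (h m n')"
  and h_act: "p \<in> carrier P \<Longrightarrow> m \<in> carrier M \<Longrightarrow> n \<in> carrier N \<Longrightarrow>
    h (actM p m) (actN p n) = actL p (h m n)"
  using crossed_square by (simp_all add: crossed_square_def)

lemma h_one_left [simp]: "n \<in> carrier N \<Longrightarrow> h \<one>\<^bsub>M\<^esub> n = \<one>\<^bsub>L\<^esub>"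
  using h_mult_left[of "\<one>\<^bsub>M\<^esub>" "\<one>\<^bsub>M\<^esub>" n] by simp

lemma actL_conj:
  assumes "p \<in> carrier P" and "q \<in> carrier P" and "l \<in> carrier L"
  shows "actL p (actL q l) = actL (p \<otimes>\<^bsub>P\<^esub> q \<otimes>\<^bsub>P\<^esub> inv\<^bsub>P\<^esub> p) (actL p l)"
  using assms by (simp add: LP.mult_act P.m_assoc)

lemma act_mu_nu_commute_h:
  assumes m: "m \<in> carrier M" and n: "n \<in> carrier N" and l: "l \<in> carrier L"
  shows "actL (mu m) (actL (nu n) l) \<otimes>\<^bsub>L\<^esub> h m n = h m n \<otimes>\<^bsub>L\<^esub> actL (nu n) (actL (mu m) l)"
proof -
  define w where "w = actL (nu n) (actL (mu m) l)"
  have w: "w \<in> carrier L" using assms by (simp add: w_def)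
  \<comment> \<open>conjugation by h m n is the action of mu (lam (h m n)), the commutator of mu m and nu n\<close>
  have "h m n \<otimes>\<^bsub>L\<^esub> w \<otimes>\<^bsub>L\<^esub> inv\<^bsub>L\<^esub> (h m n) = actL (mu (lam (h m n))) w"
    using assms w by (simp add: peiffer_L)
  also have "\<dots> = actL (mu m) (actL (nu n) l)"
    using assms by (simp add: w_def lam_h mu_act LP.mult_act P.m_assoc P.inv_mult_group)
  finally have "actL (mu m) (actL (nu n) l) \<otimes>\<^bsub>L\<^esub> h m n = h m n \<otimes>\<^bsub>L\<^esub> w \<otimes>\<^bsub>L\<^esub> inv\<^bsub>L\<^esub> (h m n) \<otimes>\<^bsub>L\<^esub> h m n"
    by simp
  then show ?thesis
    using assms w by (simp add: w_def L.m_assoc)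
qed

abbreviation "A1 \<equiv> semidirect L N (\<lambda>n l. actL (nu n) l)"
abbreviation "B1 \<equiv> semidirect M P actM"
abbreviation "act1 \<equiv> (\<lambda>(m, p) (l, n). (actL (mu m) (actL p l) \<otimes>\<^bsub>L\<^esub> h m (actN p n), actN p n))"
abbreviation "\<alpha>1 \<equiv> (\<lambda>(l, n). (lam l, nu n))"

sublocale LN: aut_action L N "\<lambda>n l. actL (nu n) l"
  using action_by_automorphisms_via_hom[OF LP.aut_action_axioms N.group_axioms nu.homh]
  by (simp add: aut_action_def aut_action_axioms_def L.group_axioms N.group_axioms)

lemma group_A1: "group A1"
  by (rule LN.semidirect_group)

lemma group_B1: "group B1"
  by (rule MP.semidirect_group)

lemma act1_mult:
  assumes m: "m \<in> carrier M" and p: "p \<in> carrier P" and l: "l \<in> carrier L" and n: "n \<in> carrier N"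
    and l': "l' \<in> carrier L" and n': "n' \<in> carrier N"
  shows "act1 (m, p) ((l, n) \<otimes>\<^bsub>A1\<^esub> (l', n')) = act1 (m, p) (l, n) \<otimes>\<^bsub>A1\<^esub> act1 (m, p) (l', n')"
proof -
  define x where "x = actN p n"
  have x: "x \<in> carrier N" using assms by (simp add: x_def)
  have "actL (mu m) (actL p (l \<otimes>\<^bsub>L\<^esub> actL (nu n) l')) \<otimes>\<^bsub>L\<^esub> h m (actN p (n \<otimes>\<^bsub>N\<^esub> n'))
      = actL (mu m) (actL p l) \<otimes>\<^bsub>L\<^esub> (actL (mu m) (actL (nu x) (actL p l')) \<otimes>\<^bsub>L\<^esub> h m x)
          \<otimes>\<^bsub>L\<^esub> actL (nu x) (h m (actN p n'))"
    using assms by (simp add: x_def nu_act actL_conj[of p "nu n" l'] h_mult_right L.m_assoc)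
  also have "\<dots> = (actL (mu m) (actL p l) \<otimes>\<^bsub>L\<^esub> h m x)
          \<otimes>\<^bsub>L\<^esub> actL (nu x) (actL (mu m) (actL p l') \<otimes>\<^bsub>L\<^esub> h m (actN p n'))"
    using assms x by (simp add: act_mu_nu_commute_h L.m_assoc)
  finally show ?thesis
    using assms by (simp add: x_def)
qed

lemma act1_mult_act:
  assumes m: "m \<in> carrier M" and p: "p \<in> carrier P" and m': "m' \<in> carrier M" and p': "p' \<in> carrier P"
    and l: "l \<in> carrier L" and n: "n \<in> carrier N"
  shows "act1 ((m, p) \<otimes>\<^bsub>B1\<^esub> (m', p')) (l, n) = act1 (m, p) (act1 (m', p') (l, n))"
proof -
  define x where "x = actN p (actN p' n)"
  have x: "x \<in> carrier N" using assms by (simp add: x_def)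
  have "actL (mu (m \<otimes>\<^bsub>M\<^esub> actM p m')) (actL (p \<otimes>\<^bsub>P\<^esub> p') l) \<otimes>\<^bsub>L\<^esub> h (m \<otimes>\<^bsub>M\<^esub> actM p m') x
      = actL (mu m) (actL (mu (actM p m')) (actL p (actL p' l)))
          \<otimes>\<^bsub>L\<^esub> (actL (mu m) (h (actM p m') x) \<otimes>\<^bsub>L\<^esub> h m x)"
    using assms x by (simp add: LP.mult_act h_mult_left L.m_assoc)
  also have "\<dots> = actL (mu m) (actL p (actL (mu m') (actL p' l) \<otimes>\<^bsub>L\<^esub> h m' (actN p' n))) \<otimes>\<^bsub>L\<^esub> h m x"
    using assms by (simp add: x_def mu_act actL_conj[of p "mu m'"] h_act L.m_assoc)
  finally show ?thesis
    using assms by (simp add: x_def NP.mult_act)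
qed

lemma aut_action_A1_B1: "aut_action A1 B1 act1"
proof -
  have "action_by_automorphisms A1 B1 act1"
  proof (rule action_by_automorphismsI[OF group_A1 group_B1])
    fix b x y assume "b \<in> carrier B1" "x \<in> carrier A1" "y \<in> carrier A1"
    then show "act1 b (x \<otimes>\<^bsub>A1\<^esub> y) = act1 b x \<otimes>\<^bsub>A1\<^esub> act1 b y"
      using act1_mult by (cases b, cases x, cases y) auto
  next
    fix b b' a assume "b \<in> carrier B1" "b' \<in> carrier B1" "a \<in> carrier A1"
    then show "act1 (b \<otimes>\<^bsub>B1\<^esub> b') a = act1 b (act1 b' a)"
      using act1_mult_act by (cases b, cases b', cases a) auto
  qed auto
  then show ?thesis
    by (simp add: aut_action_def aut_action_axioms_def group_A1 group_B1)
qed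

lemma crossed_module_A1_B1: "crossed_module A1 B1 act1 \<alpha>1"
  unfolding crossed_module_def
proof (intro conjI ballI group_A1 group_B1)
  show "action_by_automorphisms A1 B1 act1"
    using aut_action_A1_B1 by (simp add: aut_action_def aut_action_axioms_def)
  show "\<alpha>1 \<in> hom A1 B1"
    by (auto simp: hom_def lam_act)
next
  fix b a assume "b \<in> carrier B1" "a \<in> carrier A1"
  then show "\<alpha>1 (act1 b a) = b \<otimes>\<^bsub>B1\<^esub> \<alpha>1 a \<otimes>\<^bsub>B1\<^esub> inv\<^bsub>B1\<^esub> b"
    by (cases b, cases a)
      (auto simp: lam_act lam_h nu_act peiffer_M MP.mult_act M.m_assoc P.m_assoc)
next
  fix a a' assume "a \<in> carrier A1" "a' \<in> carrier A1"
  then show "act1 (\<alpha>1 a) a' = a \<otimes>\<^bsub>A1\<^esub> a' \<otimes>\<^bsub>A1\<^esub> inv\<^bsub>A1\<^esub> a"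
    by (cases a, cases a')
      (auto simp: peiffer_L h_lam_left peiffer_N LP.mult_act L.m_assoc N.m_assoc P.m_assoc)
qed

abbreviation "sA \<equiv> (\<lambda>(l::'l, n::'n). n)"
abbreviation "sB \<equiv> (\<lambda>(m::'m, p::'p). p)"
abbreviation "tA \<equiv> (\<lambda>(l, n). lam' l \<otimes>\<^bsub>N\<^esub> n)"
abbreviation "tB \<equiv> (\<lambda>(m, p). mu m \<otimes>\<^bsub>P\<^esub> p)"
abbreviation "eA \<equiv> (\<lambda>n. (\<one>\<^bsub>L\<^esub>, n))"
abbreviation "eB \<equiv> (\<lambda>p. (\<one>\<^bsub>M\<^esub>, p))"
abbreviation "mA \<equiv> (\<lambda>((l', n'), (l, n)). (l' \<otimes>\<^bsub>L\<^esub> l, n))"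
abbreviation "mB \<equiv> (\<lambda>((m', p'), (m, p)). (m' \<otimes>\<^bsub>M\<^esub> m, p))"

lemma source_xmod_hom: "xmod_hom A1 B1 act1 \<alpha>1 N P actN nu sA sB"
  unfolding xmod_hom_def hom_def by auto

lemma target_xmod_hom: "xmod_hom A1 B1 act1 \<alpha>1 N P actN nu tA tB"
  unfolding xmod_hom_def hom_def
  by (auto simp: peiffer_N mu_act nu_lam' lam'_act lam'_h NP.mult_act N.m_assoc P.m_assoc)

lemma identity_xmod_hom: "xmod_hom N P actN nu A1 B1 act1 \<alpha>1 eA eB"
  unfolding xmod_hom_def hom_def by auto

lemma composition_A_mult:
  assumes "l1' \<in> carrier L" "l1 \<in> carrier L" "n1 \<in> carrier N" "l2' \<in> carrier L" "l2 \<in> carrier L" "n2 \<in> carrier N"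
  shows "(l1' \<otimes>\<^bsub>L\<^esub> actL (nu (lam' l1 \<otimes>\<^bsub>N\<^esub> n1)) l2') \<otimes>\<^bsub>L\<^esub> (l1 \<otimes>\<^bsub>L\<^esub> actL (nu n1) l2)
       = (l1' \<otimes>\<^bsub>L\<^esub> l1) \<otimes>\<^bsub>L\<^esub> actL (nu n1) (l2' \<otimes>\<^bsub>L\<^esub> l2)"
  using assms by (simp add: nu_lam' LP.mult_act peiffer_L L.m_assoc)

lemma composition_B_mult:
  assumes "m1' \<in> carrier M" "m1 \<in> carrier M" "p1 \<in> carrier P" "m2' \<in> carrier M" "m2 \<in> carrier M" "p2 \<in> carrier P"
  shows "(m1' \<otimes>\<^bsub>M\<^esub> actM (mu m1 \<otimes>\<^bsub>P\<^esub> p1) m2') \<otimes>\<^bsub>M\<^esub> (m1 \<otimes>\<^bsub>M\<^esub> actM p1 m2)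
       = (m1' \<otimes>\<^bsub>M\<^esub> m1) \<otimes>\<^bsub>M\<^esub> actM p1 (m2' \<otimes>\<^bsub>M\<^esub> m2)"
  using assms by (simp add: MP.mult_act peiffer_M M.m_assoc)

lemma composition_act:
  assumes m': "m' \<in> carrier M" and m: "m \<in> carrier M" and p: "p \<in> carrier P"
    and l': "l' \<in> carrier L" and l: "l \<in> carrier L" and n: "n \<in> carrier N"
  shows "actL (mu m') (actL (mu m \<otimes>\<^bsub>P\<^esub> p) l') \<otimes>\<^bsub>L\<^esub> h m' (actN (mu m \<otimes>\<^bsub>P\<^esub> p) (lam' l \<otimes>\<^bsub>N\<^esub> n))
           \<otimes>\<^bsub>L\<^esub> (actL (mu m) (actL p l) \<otimes>\<^bsub>L\<^esub> h m (actN p n))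
       = actL (mu (m' \<otimes>\<^bsub>M\<^esub> m)) (actL p (l' \<otimes>\<^bsub>L\<^esub> l)) \<otimes>\<^bsub>L\<^esub> h (m' \<otimes>\<^bsub>M\<^esub> m) (actN p n)"
proof -
  define x where "x = actN p n"
  define z where "z = actL (mu m) (actL p l) \<otimes>\<^bsub>L\<^esub> h m x"
  have z: "z \<in> carrier L" and x: "x \<in> carrier N" using assms by (simp_all add: z_def x_def)
  \<comment> \<open>\<open>act1 (m, p) (l, n) = (z, x)\<close>, and its target \<open>lam' z \<otimes> x\<close> is where \<open>h m'\<close> gets evaluated\<close>
  have "actN (mu m \<otimes>\<^bsub>P\<^esub> p) (lam' l \<otimes>\<^bsub>N\<^esub> n) = lam' z \<otimes>\<^bsub>N\<^esub> x"
    using assms by (simp add: z_def x_def NP.mult_act lam'_act lam'_h N.m_assoc)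
  moreover have "h m' (lam' z \<otimes>\<^bsub>N\<^esub> x) = actL (mu m') z \<otimes>\<^bsub>L\<^esub> h m' x \<otimes>\<^bsub>L\<^esub> inv\<^bsub>L\<^esub> z"
    using assms z x by (simp add: h_mult_right h_lam'_right nu_lam' peiffer_L L.m_assoc)
  ultimately have "actL (mu m') (actL (mu m \<otimes>\<^bsub>P\<^esub> p) l') \<otimes>\<^bsub>L\<^esub> h m' (actN (mu m \<otimes>\<^bsub>P\<^esub> p) (lam' l \<otimes>\<^bsub>N\<^esub> n)) \<otimes>\<^bsub>L\<^esub> z
      = actL (mu m') (actL (mu m) (actL p l')) \<otimes>\<^bsub>L\<^esub> actL (mu m') z \<otimes>\<^bsub>L\<^esub> h m' x"
    using assms z x by (simp add: LP.mult_act L.m_assoc)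
  also have "\<dots> = actL (mu (m' \<otimes>\<^bsub>M\<^esub> m)) (actL p (l' \<otimes>\<^bsub>L\<^esub> l)) \<otimes>\<^bsub>L\<^esub> h (m' \<otimes>\<^bsub>M\<^esub> m) x"
    using assms x by (simp add: z_def h_mult_left LP.mult_act L.m_assoc)
  finally show ?thesis
    by (simp add: z_def x_def)
qed

lemma composition_xmod_hom:
  "xmod_hom (pullback_group A1 sA tA) (pullback_group B1 sB tB) (pair_act act1) (pair_map \<alpha>1)
            A1 B1 act1 \<alpha>1 mA mB"
  unfolding xmod_hom_def
proof (intro conjI ballI)
  show "mA \<in> hom (pullback_group A1 sA tA) A1"
    using composition_A_mult by (fastforce simp: hom_def)
  show "mB \<in> hom (pullback_group B1 sB tB) B1"
    using composition_B_mult by (fastforce simp: hom_def)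
  fix a assume "a \<in> carrier (pullback_group A1 sA tA)"
  then show "mB (pair_map \<alpha>1 a) = \<alpha>1 (mA a)"
    by (auto simp: pair_map_def)
next
  fix b a assume "b \<in> carrier (pullback_group B1 sB tB)" "a \<in> carrier (pullback_group A1 sA tA)"
  then show "mA (pair_act act1 b a) = act1 (mB b) (mA a)"
    using composition_act by (auto simp: pair_act_def)
qed

lemma internal_category: "internal_cat_xmod A1 B1 act1 \<alpha>1 N P actN nu sA sB tA tB eA eB mA mB"
  unfolding internal_cat_xmod_def
  by (intro conjI crossed_module_A1_B1 crossed_module_NP source_xmod_hom target_xmod_hom
      identity_xmod_hom composition_xmod_hom)
    (auto simp: L.m_assoc M.m_assoc N.m_assoc P.m_assoc)

end

theorem mainTheorem3:
  fixes L :: "('l, 'c1) monoid_scheme" and M :: "('m, 'c2) monoid_scheme"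
    and N :: "('n, 'c3) monoid_scheme" and P :: "('p, 'c4) monoid_scheme"
    and lam :: "'l \<Rightarrow> 'm" and lam' :: "'l \<Rightarrow> 'n" and mu :: "'m \<Rightarrow> 'p" and nu :: "'n \<Rightarrow> 'p"
    and actL :: "'p \<Rightarrow> 'l \<Rightarrow> 'l" and actM :: "'p \<Rightarrow> 'm \<Rightarrow> 'm" and actN :: "'p \<Rightarrow> 'n \<Rightarrow> 'n"
    and h :: "'m \<Rightarrow> 'n \<Rightarrow> 'l"
  assumes "crossed_square L M N P lam lam' mu nu actL actM actN h"
  defines "A1 \<equiv> semidirect L N (\<lambda>n l. actL (nu n) l)"
      and "B1 \<equiv> semidirect M P actM"
      and "act1 \<equiv> (\<lambda>(m, p) (l, n). (actL (mu m) (actL p l) \<otimes>\<^bsub>L\<^esub> h m (actN p n), actN p n))"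
      and "\<alpha>1 \<equiv> (\<lambda>(l, n). (lam l, nu n))"
      and "sA \<equiv> (\<lambda>(l, n). n)" and "sB \<equiv> (\<lambda>(m, p). p)"
      and "tA \<equiv> (\<lambda>(l, n). lam' l \<otimes>\<^bsub>N\<^esub> n)" and "tB \<equiv> (\<lambda>(m, p). mu m \<otimes>\<^bsub>P\<^esub> p)"
      and "eA \<equiv> (\<lambda>n. (\<one>\<^bsub>L\<^esub>, n))" and "eB \<equiv> (\<lambda>p. (\<one>\<^bsub>M\<^esub>, p))"
      and "mA \<equiv> (\<lambda>((l', n'), (l, n)). (l' \<otimes>\<^bsub>L\<^esub> l, n))"
      and "mB \<equiv> (\<lambda>((m', p'), (m, p)). (m' \<otimes>\<^bsub>M\<^esub> m, p))"
  shows "crossed_module A1 B1 act1 \<alpha>1 \<and> crossed_module N P actN nu \<and>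
         internal_cat_xmod A1 B1 act1 \<alpha>1 N P actN nu sA sB tA tB eA eB mA mB"
proof -
  interpret crossed_sq L M N P lam lam' mu nu actL actM actN h
    by (rule crossed_sq.intro) fact
  show ?thesis
    unfolding A1_def B1_def act1_def \<alpha>1_def sA_def sB_def tA_def tB_def eA_def eB_def mA_def mB_def
    using crossed_module_A1_B1 crossed_module_NP internal_category by blast
qed

end
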